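(* Let $m,n,p,q$ be arbitrary integers and define $$P(x_1,x_2,x_3,x_4)=\begin{bmatrix}x_1 & x_2 & x_3 & x_4\\ -nx_2 & x_1+mx_2 & -nx_4 & x_3+mx_4\\ -qx_3 & -qx_4 & x_1+px_3 & x_2+px_4\\ qnx_4 & -q(x_3+mx_4) & -nx_2-pnx_4 & x_1+mx_2+p(x_3+mx_4)\end{bmatrix}.$$ Then for independent variables $x_i,y_i$, $P(x_1,\dots,x_4)P(y_1,\dots,y_4)=P(z_1,\dots,z_4)$, where $z_1=x_1y_1-nx_2y_2-qx_3y_3+qnx_4y_4$, $z_2=x_1y_2+x_2y_1+mx_2y_2-qx_3y_4-qx_4y_3-mqx_4y_4$, $z_3=x_1y_3-nx_2y_4+x_3y_1+px_3y_3-nx_4y_2-npx_4y_4$, $z_4=x_1y_4+x_2y_3+mx_2y_4+x_3y_2+px_3y_4+x_4y_1+mx_4y_2+px_4y_3+mpx_4y_4$. Consequently the quaternary quartic form $f(x_1,\dots,x_4)=\det P(x_1,\dots,x_4)$ satisfies $f(x_1,\dots,x_4)f(y_1,\dots,y_4)=f(z_1,\dots,z_4)$. *)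

theory Defs
  imports "HOL-Analysis.Analysis"
begin

text \<open>Entries of a 4x4 matrix given row-wise as a list of lists, indexed by the type 4
 (index i of type 4 corresponds to row/column number i, via Rep_bit0 i in 0..3).\<close>

definition mat4 :: "'a list list \<Rightarrow> 'a ^ 4 ^ 4" where
  "mat4 rs = (\<chi> i j. (rs ! (nat (Rep_bit0 i))) ! (nat (Rep_bit0 j)))"

definition Pmat :: "int \<Rightarrow> int \<Rightarrow> int \<Rightarrow> int \<Rightarrow> 'a::comm_ring_1 \<Rightarrow> 'a \<Rightarrow> 'a \<Rightarrow> 'a \<Rightarrow> 'a ^ 4 ^ 4" where
  "Pmat m n p q x1 x2 x3 x4 = (let m = of_int m; n = of_int n; p = of_int p; q = of_int q in
     mat4 [[x1, x2, x3, x4],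
           [- n * x2, x1 + m * x2, - n * x4, x3 + m * x4],
           [- q * x3, - q * x4, x1 + p * x3, x2 + p * x4],
           [q * n * x4, - q * (x3 + m * x4), - n * x2 - p * n * x4, x1 + m * x2 + p * (x3 + m * x4)]])"

definition fform :: "int \<Rightarrow> int \<Rightarrow> int \<Rightarrow> int \<Rightarrow> 'a::comm_ring_1 \<Rightarrow> 'a \<Rightarrow> 'a \<Rightarrow> 'a \<Rightarrow> 'a" where
  "fform m n p q x1 x2 x3 x4 = det (Pmat m n p q x1 x2 x3 x4)"

end

theory Submission
  imports Defs
begin

text \<open>Writing \<open>\<alpha>\<^sup>2 = m\<alpha> - n\<close> and \<open>\<beta>\<^sup>2 = p\<beta> - q\<close>, the matrix \<open>P(x\<^sub>1,\<dots>,x\<^sub>4)\<close> is the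
  matrix of multiplication by \<open>x\<^sub>1 + x\<^sub>2\<alpha> + x\<^sub>3\<beta> + x\<^sub>4\<alpha>\<beta>\<close> in the commutative algebra
  spanned by \<open>1, \<alpha>, \<beta>, \<alpha>\<beta>\<close>, and \<open>z\<^sub>1,\<dots>,z\<^sub>4\<close> are the coordinates of the product of the
  two elements. Hence \<open>P\<close> is multiplicative, and \<open>f = det P\<close> (the norm form) is
  multiplicative because the determinant is.\<close>

lemma Rep_bit0_numeral_4:
  "Rep_bit0 (1::4) = 1" "Rep_bit0 (2::4) = 2" "Rep_bit0 (3::4) = 3" "Rep_bit0 (4::4) = 0"
  by (simp_all add: bit0.Rep_1 bit0.Rep_numeral)

lemma Pmat_mult:
  fixes x1 x2 x3 x4 y1 y2 y3 y4 :: "'a::comm_ring_1"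
  shows "Pmat m n p q x1 x2 x3 x4 ** Pmat m n p q y1 y2 y3 y4 = Pmat m n p q
     (x1 * y1 - of_int n * x2 * y2 - of_int q * x3 * y3 + of_int q * of_int n * x4 * y4)
     (x1 * y2 + x2 * y1 + of_int m * x2 * y2 - of_int q * x3 * y4 - of_int q * x4 * y3
        - of_int m * of_int q * x4 * y4)
     (x1 * y3 - of_int n * x2 * y4 + x3 * y1 + of_int p * x3 * y3 - of_int n * x4 * y2
        - of_int n * of_int p * x4 * y4)
     (x1 * y4 + x2 * y3 + of_int m * x2 * y4 + x3 * y2 + of_int p * x3 * y4 + x4 * y1
        + of_int m * x4 * y2 + of_int p * x4 * y3 + of_int m * of_int p * x4 * y4)"
  unfolding vec_eq_iff forall_4 matrix_matrix_mult_def Pmat_def mat4_def Let_def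
  by (simp add: sum_4 Rep_bit0_numeral_4 algebra_simps)

lemma fform_mult_of_Pmat_mult:
  assumes "Pmat m n p q x1 x2 x3 x4 ** Pmat m n p q y1 y2 y3 y4 = Pmat m n p q z1 z2 z3 z4"
  shows "fform m n p q x1 x2 x3 x4 * fform m n p q y1 y2 y3 y4 = fform m n p q z1 z2 z3 z4"
  unfolding fform_def using assms by (metis det_mul)

theorem mainTheorem3:
  fixes m n p q :: int and x1 x2 x3 x4 y1 y2 y3 y4 :: "'a::comm_ring_1"
  defines "z1 \<equiv> x1 * y1 - of_int n * x2 * y2 - of_int q * x3 * y3 + of_int q * of_int n * x4 * y4"
      and "z2 \<equiv> x1 * y2 + x2 * y1 + of_int m * x2 * y2 - of_int q * x3 * y4 - of_int q * x4 * y3 - of_int m * of_int q * x4 * y4"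
      and "z3 \<equiv> x1 * y3 - of_int n * x2 * y4 + x3 * y1 + of_int p * x3 * y3 - of_int n * x4 * y2 - of_int n * of_int p * x4 * y4"
      and "z4 \<equiv> x1 * y4 + x2 * y3 + of_int m * x2 * y4 + x3 * y2 + of_int p * x3 * y4 + x4 * y1 + of_int m * x4 * y2 + of_int p * x4 * y3 + of_int m * of_int p * x4 * y4"
  shows "Pmat m n p q x1 x2 x3 x4  **  Pmat m n p q y1 y2 y3 y4 = Pmat m n p q z1 z2 z3 z4
       \<and> fform m n p q x1 x2 x3 x4  *  fform m n p q y1 y2 y3 y4 = fform m n p q z1 z2 z3 z4"
proof
  show "Pmat m n p q x1 x2 x3 x4 ** Pmat m n p q y1 y2 y3 y4 = Pmat m n p q z1 z2 z3 z4"
    unfolding z1_def z2_def z3_def z4_def by (rule Pmat_mult)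
  then show "fform m n p q x1 x2 x3 x4 * fform m n p q y1 y2 y3 y4 = fform m n p q z1 z2 z3 z4"
    by (rule fform_mult_of_Pmat_mult)
qed

end
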